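(* For every $\alpha\in\mathbb R$, the equation $2x-1=\tanh(\alpha x^2)$ has a unique solution $x\in(0,1)$. *)

theory Defs
  imports "HOL-Analysis.Analysis"
begin

end

theory Submission
  imports Defs
begin

text \<open>
  Since \<open>tanh\<close> is a bijection onto \<open>(-1, 1)\<close>, a point \<open>x \<in> (0,1)\<close> solves the equation
  iff \<open>artanh (2x - 1) / x\<^sup>2 = \<alpha>\<close>. This quotient is strictly increasing on \<open>(0,1)\<close>: its
  derivative has the sign of \<open>1 - 2(1 - x) ln t\<close> with \<open>t = x / (1 - x)\<close>, and
  \<open>ln t < t / 2 < (1 + t) / 2 = 1 / (2(1 - x))\<close>. This gives uniqueness; existence is the
  intermediate value theorem, as \<open>2x - 1 - tanh (\<alpha> x\<^sup>2)\<close> is negative at 0 and positive at 1.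
\<close>

lemma ln_less_half:
  fixes t :: real
  assumes "0 < t"
  shows "ln t < t / 2"
proof -
  define s where "s = sqrt t"
  have s: "0 < s" "t = s\<^sup>2" using assms by (auto simp: s_def)
  have ln_t: "ln t = 2 * ln s" using s by (simp add: ln_realpow)
  have "ln s < s - 1" if "s \<noteq> 1"
    using ln_le_minus_one[of s] ln_eq_minus_one[of s] s that by fastforce
  moreover have "2 * (s - 1) \<le> s\<^sup>2 / 2"
    using zero_le_power2[of "s - 2"] by (simp add: power2_eq_square algebra_simps)
  ultimately show ?thesis
    using ln_t s by (cases "s = 1") auto
qed

lemma artanh_affine_eq_ln:
  fixes x :: real
  assumes "0 < x" "x < 1"
  shows "2 * artanh (2 * x - 1) = ln (x / (1 - x))"
  unfolding artanh_def using assms by (simp add: divide_simps)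

definition artanh_quotient :: "real \<Rightarrow> real" where
  "artanh_quotient x = artanh (2 * x - 1) / x\<^sup>2"

lemma artanh_affine_has_derivative:
  fixes x :: real
  assumes "0 < x" "x < 1"
  shows "((\<lambda>x. artanh (2 * x - 1)) has_field_derivative 1 / (2 * x * (1 - x))) (at x)"
proof -
  have "\<bar>2 * x - 1\<bar> < 1" using assms by auto
  then have "((\<lambda>x. artanh (2 * x - 1)) has_field_derivative
              1 / (1 - (2 * x - 1)\<^sup>2) * 2) (at x)"
    by (intro DERIV_chain2[OF artanh_real_has_field_derivative])
       (auto intro!: derivative_eq_intros)
  moreover have "1 / (1 - (2 * x - 1)\<^sup>2) * 2 = 1 / (2 * x * (1 - x))"
    using assms by (simp add: field_simps power2_eq_square)
  ultimately show ?thesis by simp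
qed

lemma artanh_quotient_has_derivative:
  fixes x :: real
  assumes "0 < x" "x < 1"
  shows "(artanh_quotient has_field_derivative
           (1 - 4 * (1 - x) * artanh (2 * x - 1)) / (2 * x ^ 3 * (1 - x))) (at x)"
proof -
  have "(artanh_quotient has_field_derivative
          (1 / (2 * x * (1 - x)) * x\<^sup>2 - artanh (2 * x - 1) * (2 * x)) / (x\<^sup>2)\<^sup>2) (at x)"
    unfolding artanh_quotient_def[abs_def] using assms
    by (auto intro!: derivative_eq_intros artanh_affine_has_derivative)
  moreover have "(1 / (2 * x * (1 - x)) * x\<^sup>2 - artanh (2 * x - 1) * (2 * x)) / (x\<^sup>2)\<^sup>2
                 = (1 - 4 * (1 - x) * artanh (2 * x - 1)) / (2 * x ^ 3 * (1 - x))"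
    using assms by (simp add: field_simps power2_eq_square power3_eq_cube)
  ultimately show ?thesis by simp
qed

lemma artanh_quotient_derivative_pos:
  fixes x :: real
  assumes "0 < x" "x < 1"
  shows "0 < (1 - 4 * (1 - x) * artanh (2 * x - 1)) / (2 * x ^ 3 * (1 - x))"
proof -
  define t where "t = x / (1 - x)"
  have "0 < t" using assms by (simp add: t_def)
  then have "ln t < (1 + t) / 2" using ln_less_half[of t] by simp
  also have "(1 + t) / 2 = 1 / (2 * (1 - x))"
    using assms by (simp add: t_def field_simps)
  finally have "2 * artanh (2 * x - 1) < 1 / (2 * (1 - x))"
    using artanh_affine_eq_ln[OF assms] by (simp add: t_def)
  then have "4 * (1 - x) * artanh (2 * x - 1) < 1"
    using assms by (simp add: field_simps)
  then show ?thesis using assms by simp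
qed

lemma strict_mono_on_artanh_quotient: "strict_mono_on {0<..<1} artanh_quotient"
proof (rule strict_mono_onI)
  fix a b :: real
  assume "a \<in> {0<..<1}" "b \<in> {0<..<1}" "a < b"
  then show "artanh_quotient a < artanh_quotient b"
    by (intro DERIV_pos_imp_increasing[OF \<open>a < b\<close>])
       (meson artanh_quotient_has_derivative artanh_quotient_derivative_pos
          greaterThanLessThan_iff le_less_trans less_le_trans)
qed

lemma artanh_quotient_eq_if_tanh_eq:
  fixes x \<alpha> :: real
  assumes "0 < x" "2 * x - 1 = tanh (\<alpha> * x\<^sup>2)"
  shows "artanh_quotient x = \<alpha>"
  using assms by (simp add: artanh_quotient_def artanh_tanh_real)

lemma tanh_equation_solvable:
  fixes \<alpha> :: real
  shows "\<exists>x. 0 < x \<and> x < 1 \<and> 2 * x - 1 = tanh (\<alpha> * x\<^sup>2)"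
proof -
  define f where "f x = 2 * x - 1 - tanh (\<alpha> * x\<^sup>2)" for x :: real
  have "continuous_on {0..1} f"
    unfolding f_def by (intro continuous_intros) (simp add: cosh_real_pos)
  moreover have "f 0 < 0" "0 < f 1"
    using tanh_real_bounds[of \<alpha>] by (simp_all add: f_def)
  ultimately obtain x where "0 \<le> x" "x \<le> 1" "f x = 0"
    using IVT'[of f 0 0 1] by fastforce
  moreover from \<open>f 0 < 0\<close> \<open>0 < f 1\<close> \<open>f x = 0\<close> have "x \<noteq> 0" "x \<noteq> 1" by auto
  ultimately have "0 < x" "x < 1" "2 * x - 1 = tanh (\<alpha> * x\<^sup>2)"
    by (simp_all add: f_def)
  then show ?thesis by blast
qed

theorem lemma33:
  fixes \<alpha> :: real
  shows "\<exists>!x::real. 0 < x \<and> x < 1 \<and> 2 * x - 1 = tanh (\<alpha> * x ^ 2)"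
proof (rule ex_ex1I)
  show "\<exists>x. 0 < x \<and> x < 1 \<and> 2 * x - 1 = tanh (\<alpha> * x ^ 2)"
    by (rule tanh_equation_solvable)
next
  fix x y :: real
  assume x: "0 < x \<and> x < 1 \<and> 2 * x - 1 = tanh (\<alpha> * x ^ 2)"
     and y: "0 < y \<and> y < 1 \<and> 2 * y - 1 = tanh (\<alpha> * y ^ 2)"
  then have "artanh_quotient x = artanh_quotient y"
    using artanh_quotient_eq_if_tanh_eq by metis
  with x y show "x = y"
    using strict_mono_on_imp_inj_on[OF strict_mono_on_artanh_quotient]
    by (auto dest: inj_onD)
qed

end
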